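(* Let $B$, $C$ be unital $\mathrm{C}^*$-algebras, let $\{\phi_i\}_{i=1}^m$, $\{\psi_j\}_{j=1}^n$ be families of surjective $*$-homomorphisms $B\to C$ with $m\ge n$, and let $[c_{ij}]\in M_{m,n}(C)$ satisfy $\phi_i(b)c_{ij}=c_{ij}\psi_j(b)$ for all $b\in B$, $1\le i\le m$, $1\le j\le n$. If $[c_{ij}]$ is right invertible and $C$ has trivial center, then $m=n$ and there exist invertible matrices $E,F\in M_n(C)$ such that $E[c_{ij}]F$ is a diagonal matrix with invertible diagonal entries.
   Context: A matrix $[c_{ij}]\in M_{m,n}(C)$ is right invertible if there is $[d_{ij}]\in M_{n,m}(C)$ with $[c_{ij}][d_{ij}]=I_m$. *)

theory Defs
  imports Complex_Main "Jordan_Normal_Form.Matrix"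
begin

class cstar_ops =
  fixes scaleC :: "complex \<Rightarrow> 'a \<Rightarrow> 'a"
    and cstar :: "'a \<Rightarrow> 'a"

class unital_cstar_algebra = real_normed_algebra_1 + banach + cstar_ops +
  assumes scaleC_scaleR: "scaleR r x = scaleC (complex_of_real r) x"
    and scaleC_add_right: "scaleC a (x + y) = scaleC a x + scaleC a y"
    and scaleC_add_left: "scaleC (a + b) x = scaleC a x + scaleC b x"
    and scaleC_scaleC: "scaleC a (scaleC b x) = scaleC (a * b) x"
    and scaleC_one: "scaleC 1 x = x"
    and norm_scaleC: "norm (scaleC a x) = cmod a * norm x"
    and mult_scaleC_left: "scaleC a x * y = scaleC a (x * y)"
    and mult_scaleC_right: "x * scaleC a y = scaleC a (x * y)"
    and cstar_cstar: "cstar (cstar x) = x"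
    and cstar_add: "cstar (x + y) = cstar x + cstar y"
    and cstar_scaleC: "cstar (scaleC a x) = scaleC (cnj a) (cstar x)"
    and cstar_mult: "cstar (x * y) = cstar y * cstar x"
    and cstar_identity: "norm (cstar x * x) = (norm x)\<^sup>2"

definition star_hom :: "('a::unital_cstar_algebra \<Rightarrow> 'b::unital_cstar_algebra) \<Rightarrow> bool" where
  "star_hom f \<longleftrightarrow>
     (\<forall>x y. f (x + y) = f x + f y) \<and>
     (\<forall>a x. f (scaleC a x) = scaleC a (f x)) \<and>
     (\<forall>x y. f (x * y) = f x * f y) \<and>
     (\<forall>x. f (cstar x) = cstar (f x))"

definition trivial_center :: "'a::unital_cstar_algebra itself \<Rightarrow> bool" where
  "trivial_center _ \<longleftrightarrow> {z::'a. \<forall>x. z * x = x * z} = range (\<lambda>a. scaleC a 1)"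

definition right_invertible_mat :: "'a::semiring_1 mat \<Rightarrow> bool" where
  "right_invertible_mat A \<longleftrightarrow>
     (\<exists>D \<in> carrier_mat (dim_col A) (dim_row A). A * D = 1\<^sub>m (dim_row A))"

definition invertible_elem :: "'a::ring_1 \<Rightarrow> bool" where
  "invertible_elem x \<longleftrightarrow> (\<exists>y. x * y = 1 \<and> y * x = 1)"

end

theory Submission
  imports Defs "Jordan_Normal_Form.Determinant"
begin

text \<open>Each entry \<open>c\<^sub>i\<^sub>j\<close> intertwines \<open>\<phi>\<^sub>i\<close> with \<open>\<psi>\<^sub>j\<close>, so by Schur's lemma (surjectivity and the
  trivial center of \<open>C\<close>) it is \<open>0\<close> or invertible. Fix in each equivalence class of the \<open>\<psi>\<^sub>j\<close> a
  representative with invertible intertwiners \<open>v\<^sub>j\<close> to it, and normalise each row by one of its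
  nonzero entries, giving invertible \<open>t\<^sub>i\<close>. Then \<open>t\<^sub>i\<^sup>-\<^sup>1 c\<^sub>i\<^sub>j v\<^sub>j\<^sup>-\<^sup>1\<close> intertwines two representatives,
  so it is \<open>0\<close> or they coincide and it is central, i.e. a scalar. Hence \<open>T c V\<close> is a complex matrix
  \<open>S\<close> for invertible diagonal \<open>T\<close>, \<open>V\<close>, and the image of \<open>S\<close> in \<open>M\<^sub>m\<^sub>,\<^sub>n(C)\<close> is right invertible. A complex
  row reduction producing a zero row of \<open>S\<close> (padded to a square matrix) would contradict this, so \<open>S\<close>
  is square with \<open>det S \<noteq> 0\<close>, and \<open>E = S\<^sup>-\<^sup>1 T\<close>, \<open>F = V\<close> reduce \<open>c\<close> to the identity.\<close>

section \<open>Intertwiners and Schur's lemma\<close>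

definition of_complex :: "complex \<Rightarrow> 'a::unital_cstar_algebra" where
  "of_complex a = scaleC a 1"

lemma of_complex_mult: "of_complex (a * b) = (of_complex a * of_complex b :: 'a::unital_cstar_algebra)"
  by (simp add: of_complex_def mult_scaleC_left scaleC_scaleC)

lemma of_complex_0: "of_complex 0 = (0::'a::unital_cstar_algebra)"
  using scaleC_scaleR[of 0 "1::'a"] by (simp add: of_complex_def)

lemma of_complex_1: "of_complex 1 = (1::'a::unital_cstar_algebra)"
  by (simp add: of_complex_def scaleC_one)

lemma norm_of_complex: "norm (of_complex a :: 'a::unital_cstar_algebra) = cmod a"
  by (simp add: of_complex_def norm_scaleC)

lemma semiring_hom_of_complex: "semiring_hom (of_complex :: complex \<Rightarrow> 'a::unital_cstar_algebra)"
  by unfold_locales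
    (simp_all add: of_complex_0 of_complex_1 of_complex_mult, simp add: of_complex_def scaleC_add_left)

lemma cstar_zero: "cstar 0 = (0::'a::unital_cstar_algebra)"
  using cstar_add[of "0::'a" 0] by simp

lemma cstar_eq_0_iff: "cstar x = 0 \<longleftrightarrow> x = (0::'a::unital_cstar_algebra)"
  by (metis cstar_cstar cstar_zero)

lemma cstar_mult_self_of_complex_nonzero:
  assumes "cstar w * w = of_complex l" and "w \<noteq> (0::'a::unital_cstar_algebra)"
  shows "l \<noteq> 0"
  using cstar_identity[of w] assms by (auto simp: norm_of_complex)

lemma central_in_range_of_complex:
  assumes "trivial_center TYPE('a::unital_cstar_algebra)" and "\<And>x. z * x = x * (z::'a)"
  shows "z \<in> range of_complex"
  using assms unfolding trivial_center_def of_complex_def by blast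

definition inv_elem :: "'a::ring_1 \<Rightarrow> 'a" where
  "inv_elem x = (SOME y. x * y = 1 \<and> y * x = 1)"

lemma inv_elem:
  assumes "invertible_elem x"
  shows "x * inv_elem x = 1" and "inv_elem x * x = 1"
  using someI_ex[OF assms[unfolded invertible_elem_def]] unfolding inv_elem_def by auto

lemma invertible_elemI:
  assumes "l * x = 1" and "x * r = (1::'a::ring_1)"
  shows "invertible_elem x"
  unfolding invertible_elem_def by (metis assms mult.assoc mult_1_left mult_1_right)

lemma invertible_elem_inv_elem: "invertible_elem x \<Longrightarrow> invertible_elem (inv_elem x)"
  using inv_elem unfolding invertible_elem_def by blast

lemma invertible_elem_mult:
  "invertible_elem (x::'a::ring_1) \<Longrightarrow> invertible_elem y \<Longrightarrow> invertible_elem (x * y)"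
  unfolding invertible_elem_def by (metis mult.assoc mult_1_left)

definition intertwines :: "('b \<Rightarrow> 'a::times) \<Rightarrow> ('b \<Rightarrow> 'a) \<Rightarrow> 'a \<Rightarrow> bool" where
  "intertwines f g w \<longleftrightarrow> (\<forall>b. f b * w = w * g b)"

definition intertwiner_equivalent :: "('b \<Rightarrow> 'a::ring_1) \<Rightarrow> ('b \<Rightarrow> 'a) \<Rightarrow> bool" where
  "intertwiner_equivalent f g \<longleftrightarrow> (\<exists>w. invertible_elem w \<and> intertwines f g w)"

lemma intertwines_one: "intertwines f f (1::'a::monoid_mult)"
  by (simp add: intertwines_def)

lemma intertwines_mult:
  "intertwines f g x \<Longrightarrow> intertwines g h y \<Longrightarrow> intertwines f h (x * (y::'a::semigroup_mult))"
  unfolding intertwines_def by (metis mult.assoc)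

lemma intertwines_inv_elem:
  assumes "invertible_elem x" and "intertwines f g x"
  shows "intertwines g f (inv_elem x)"
  unfolding intertwines_def
proof
  fix b
  have "g b * inv_elem x = inv_elem x * (x * g b) * inv_elem x"
    by (simp add: inv_elem[OF assms(1)] flip: mult.assoc)
  also have "\<dots> = inv_elem x * f b * (x * inv_elem x)"
    using assms(2) unfolding intertwines_def by (metis mult.assoc)
  also have "\<dots> = inv_elem x * f b"
    by (simp add: inv_elem[OF assms(1)])
  finally show "g b * inv_elem x = inv_elem x * f b" .
qed

lemma intertwines_cstar:
  assumes "star_hom f" "star_hom g" and "intertwines f g w"
  shows "intertwines g f (cstar w)"
  unfolding intertwines_def
proof
  fix b
  have "cstar (f (cstar b) * w) = cstar (w * g (cstar b))"
    using assms(3) by (simp add: intertwines_def)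
  thus "g b * cstar w = cstar w * f b"
    using assms(1,2) by (simp add: star_hom_def cstar_mult cstar_cstar)
qed

lemma intertwines_self_central:
  assumes "surj f" and "intertwines f f z"
  shows "z * x = x * z"
  using assms unfolding intertwines_def by (metis surjD)

text \<open>\<open>w\<^sup>* w\<close> and \<open>w w\<^sup>*\<close> intertwine a map with itself, so they are central, hence scalars, and by the
  C*-identity nonzero scalars when \<open>w \<noteq> 0\<close>; this gives a left and a right inverse of \<open>w\<close>.\<close>

lemma intertwiner_zero_or_invertible:
  assumes f: "star_hom f" "surj f" and g: "star_hom g" "surj g"
    and center: "trivial_center TYPE('a::unital_cstar_algebra)"
    and w: "intertwines f g (w::'a)"
  shows "w = 0 \<or> invertible_elem w"
proof (cases "w = 0")
  case False
  have w': "intertwines g f (cstar w)" by (rule intertwines_cstar[OF f(1) g(1) w])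
  have "cstar w * w \<in> range of_complex"
    by (rule central_in_range_of_complex[OF center intertwines_self_central[OF g(2)]])
      (rule intertwines_mult[OF w' w])
  then obtain l where l: "cstar w * w = of_complex l" by blast
  have "cstar (cstar w) * cstar w \<in> range of_complex"
    by (rule central_in_range_of_complex[OF center intertwines_self_central[OF f(2)]])
      (simp add: cstar_cstar intertwines_mult[OF w w'])
  then obtain u where u: "cstar (cstar w) * cstar w = of_complex u" by blast
  have "l \<noteq> 0" by (rule cstar_mult_self_of_complex_nonzero[OF l False])
  have "u \<noteq> 0" by (rule cstar_mult_self_of_complex_nonzero[OF u]) (simp add: cstar_eq_0_iff False)
  have "(of_complex (1 / l) * cstar w) * w = 1"
    using \<open>l \<noteq> 0\<close> by (simp add: mult.assoc l of_complex_1 flip: of_complex_mult)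
  moreover have "w * (cstar w * of_complex (1 / u)) = 1"
    using \<open>u \<noteq> 0\<close> u by (simp add: cstar_cstar of_complex_1 flip: mult.assoc of_complex_mult)
  ultimately show ?thesis by (blast intro: invertible_elemI)
qed simp

lemma intertwiner_in_range_of_complex:
  assumes f: "star_hom f" "surj f" and g: "star_hom g" "surj g"
    and center: "trivial_center TYPE('a::unital_cstar_algebra)"
    and s: "intertwines f g (s::'a)"
    and equal_if_equivalent: "intertwiner_equivalent f g \<Longrightarrow> f = g"
  shows "s \<in> range of_complex"
  using intertwiner_zero_or_invertible[OF f g center s]
proof
  assume "s = 0"
  thus ?thesis using of_complex_0 by (metis rangeI)
next
  assume "invertible_elem s"
  hence "f = g" using s equal_if_equivalent by (auto simp: intertwiner_equivalent_def)
  thus ?thesis using s intertwines_self_central[OF f(2)] central_in_range_of_complex[OF center] by auto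
qed

definition canonical_representatives ::
    "(nat \<Rightarrow> 'b \<Rightarrow> 'a::ring_1) \<Rightarrow> (nat \<Rightarrow> nat) \<Rightarrow> (nat \<Rightarrow> 'a) \<Rightarrow> bool" where
  "canonical_representatives psi r v \<longleftrightarrow>
     (\<forall>j. r j \<le> j \<and> invertible_elem (v j) \<and> intertwines (psi (r j)) (psi j) (v j)) \<and>
     (\<forall>j k. intertwiner_equivalent (psi (r j)) (psi (r k)) \<longrightarrow> r j = r k)"

lemma canonical_representatives_exist:
  fixes psi :: "nat \<Rightarrow> 'b \<Rightarrow> 'a::ring_1"
  shows "\<exists>r v. canonical_representatives psi r v"
proof -
  let ?R = "\<lambda>k j. intertwiner_equivalent (psi k) (psi j)"
  have refl: "?R j j" for j
    unfolding intertwiner_equivalent_def using intertwines_one by (metis invertible_elemI mult_1_left)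
  have sym: "?R k j \<Longrightarrow> ?R j k" for j k
    unfolding intertwiner_equivalent_def by (metis intertwines_inv_elem invertible_elem_inv_elem)
  have trans: "?R k j \<Longrightarrow> ?R j l \<Longrightarrow> ?R k l" for j k l
    unfolding intertwiner_equivalent_def by (metis intertwines_mult invertible_elem_mult)
  define r where "r j = (LEAST k. ?R k j)" for j
  have r: "?R (r j) j" for j unfolding r_def by (rule LeastI[OF refl])
  have "r j \<le> j" for j unfolding r_def by (rule Least_le[OF refl])
  moreover obtain v where "invertible_elem (v j) \<and> intertwines (psi (r j)) (psi j) (v j)" for j
    using r unfolding intertwiner_equivalent_def by metis
  moreover have "r j = r k" if "?R (r j) (r k)" for j k
  proof -
    have jk: "?R j k" by (rule trans[OF trans[OF sym[OF r] that] r])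
    have "?R l j \<longleftrightarrow> ?R l k" for l
      using trans[of l j k] trans[of l k j] jk sym[OF jk] by blast
    thus ?thesis unfolding r_def by simp
  qed
  ultimately show ?thesis unfolding canonical_representatives_def by blast
qed

text \<open>The row is normalised by a nonzero, hence invertible, entry; afterwards every entry intertwines
  two representatives.\<close>

lemma intertwiner_row_normal_form:
  fixes w :: "nat \<Rightarrow> 'a::unital_cstar_algebra"
  assumes f: "star_hom f" "surj f"
    and psi: "\<And>j. j < n \<Longrightarrow> star_hom (psi j) \<and> surj (psi j)"
    and center: "trivial_center TYPE('a)"
    and w: "\<And>j. j < n \<Longrightarrow> intertwines f (psi j) (w j)"
    and rep: "canonical_representatives psi r v"
  shows "\<exists>t. invertible_elem t \<and> (\<forall>j<n. inv_elem t * w j * inv_elem (v j) \<in> range of_complex)"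
proof (cases "\<forall>j<n. w j = 0")
  case True
  have "invertible_elem (1::'a)" by (rule invertible_elemI) simp_all
  moreover have "inv_elem 1 * w j * inv_elem (v j) \<in> range of_complex" if "j < n" for j
    using True that of_complex_0 by (metis mult_zero_left mult_zero_right rangeI)
  ultimately show ?thesis by blast
next
  case False
  then obtain j0 where j0: "j0 < n" "w j0 \<noteq> 0" by blast
  have r_le: "r j \<le> j"
    and v: "invertible_elem (v j) \<and> intertwines (psi (r j)) (psi j) (v j)"
    and r_eq: "intertwiner_equivalent (psi (r j)) (psi (r k)) \<Longrightarrow> r j = r k" for j k
    using rep unfolding canonical_representatives_def by blast+
  have psi_r: "star_hom (psi (r j)) \<and> surj (psi (r j))" if "j < n" for j
    using psi r_le[of j] that by simp
  have "invertible_elem (w j0)"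
    using intertwiner_zero_or_invertible[OF f psi[OF j0(1), THEN conjunct1]
        psi[OF j0(1), THEN conjunct2] center w[OF j0(1)]] j0(2) by simp
  define t where "t = w j0 * inv_elem (v j0)"
  have t: "invertible_elem t" "intertwines f (psi (r j0)) t"
    unfolding t_def using v[of j0]
    by (simp_all add: invertible_elem_mult[OF \<open>invertible_elem (w j0)\<close> invertible_elem_inv_elem]
        intertwines_mult[OF w[OF j0(1)] intertwines_inv_elem])
  have "inv_elem t * w j * inv_elem (v j) \<in> range of_complex" if j: "j < n" for j
  proof (rule intertwiner_in_range_of_complex[OF psi_r[OF j0(1), THEN conjunct1]
        psi_r[OF j0(1), THEN conjunct2] psi_r[OF j, THEN conjunct1] psi_r[OF j, THEN conjunct2] center])
    show "intertwines (psi (r j0)) (psi (r j)) (inv_elem t * w j * inv_elem (v j))"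
      using t v[of j]
      by (simp add: intertwines_mult[OF intertwines_mult[OF intertwines_inv_elem w[OF j]] intertwines_inv_elem])
  qed (auto dest: r_eq)
  with t show ?thesis by blast
qed

section \<open>Invertible and right invertible matrices\<close>

lemma invertible_matI:
  assumes "A \<in> carrier_mat n n" "B \<in> carrier_mat n n" "A * B = 1\<^sub>m n" "B * A = 1\<^sub>m n"
  shows "invertible_mat A"
  using assms unfolding invertible_mat_def inverts_mat_def by auto

lemma invertible_matE:
  assumes "invertible_mat A" "A \<in> carrier_mat n n"
  obtains B where "B \<in> carrier_mat n n" "A * B = 1\<^sub>m n" "B * A = 1\<^sub>m n"
proof -
  obtain B where "A * B = 1\<^sub>m n" "B * A = 1\<^sub>m (dim_row B)"
    using assms unfolding invertible_mat_def inverts_mat_def by auto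
  moreover from this have "B \<in> carrier_mat n n"
    using assms(2) by (metis carrier_matD carrier_matI index_mult_mat(2,3) index_one_mat(2,3))
  ultimately show ?thesis using that by auto
qed

lemma mult_right_inverse_cancel:
  fixes A :: "'a::semiring_1 mat"
  assumes "A * B = 1\<^sub>m k" "A \<in> carrier_mat k n" "B \<in> carrier_mat n k" "X \<in> carrier_mat k l"
  shows "A * (B * X) = X"
  using assms by (simp add: left_mult_one_mat[OF assms(4)] flip: assoc_mult_mat[of A k n B k X l])

lemma invertible_mat_mult:
  assumes A: "A \<in> carrier_mat n n" "invertible_mat A" and B: "B \<in> carrier_mat n n" "invertible_mat B"
  shows "invertible_mat (A * B)"
proof -
  obtain A' where A': "A' \<in> carrier_mat n n" "A * A' = 1\<^sub>m n" "A' * A = 1\<^sub>m n"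
    using invertible_matE[OF A(2,1)] .
  obtain B' where B': "B' \<in> carrier_mat n n" "B * B' = 1\<^sub>m n" "B' * B = 1\<^sub>m n"
    using invertible_matE[OF B(2,1)] .
  have "A * B * (B' * A') = 1\<^sub>m n"
    using A B A' B' by (simp add: assoc_mult_mat[OF A(1) B(1), of "B' * A'" n] mult_right_inverse_cancel[of B B' n n])
  moreover have "B' * A' * (A * B) = 1\<^sub>m n"
    using A B A' B' by (simp add: assoc_mult_mat[OF B'(1) A'(1), of "A * B" n] mult_right_inverse_cancel[of A' A n n])
  ultimately show ?thesis
    using A B A' B' by (intro invertible_matI[of _ n "B' * A'"]) simp_all
qed

lemma invertible_mat_diag:
  assumes "\<And>i. i < n \<Longrightarrow> invertible_elem (f i)"
  shows "invertible_mat (mat_diag n (f :: nat \<Rightarrow> 'a::ring_1))"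
proof (rule invertible_matI[of _ n "mat_diag n (\<lambda>i. inv_elem (f i))"])
  show "mat_diag n f * mat_diag n (\<lambda>i. inv_elem (f i)) = 1\<^sub>m n"
    and "mat_diag n (\<lambda>i. inv_elem (f i)) * mat_diag n f = 1\<^sub>m n"
    unfolding mat_diag_diag using inv_elem[OF assms] by (auto intro!: eq_matI simp: mat_diag_def)
qed simp_all

lemma invertible_mat_map_mat:
  assumes "semiring_hom h" and "A \<in> carrier_mat n n" "invertible_mat A"
  shows "invertible_mat (map_mat h A)"
proof -
  interpret semiring_hom h by fact
  obtain B where "B \<in> carrier_mat n n" "A * B = 1\<^sub>m n" "B * A = 1\<^sub>m n"
    using invertible_matE[OF assms(3,2)] .
  thus ?thesis using assms(2)
    by (intro invertible_matI[of _ n "map_mat h B"]) (auto simp flip: mat_hom_mult mat_hom_one)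
qed

lemma right_invertible_mat_mult_invertible:
  assumes c: "c \<in> carrier_mat m n" "right_invertible_mat c"
    and T: "T \<in> carrier_mat m m" "invertible_mat T" and V: "V \<in> carrier_mat n n" "invertible_mat V"
  shows "right_invertible_mat (T * c * V)"
proof -
  obtain D where D: "D \<in> carrier_mat n m" "c * D = 1\<^sub>m m"
    using c unfolding right_invertible_mat_def by auto
  obtain T' where T': "T' \<in> carrier_mat m m" "T * T' = 1\<^sub>m m"
    using invertible_matE[OF T(2,1)] by metis
  obtain V' where V': "V' \<in> carrier_mat n n" "V * V' = 1\<^sub>m n"
    using invertible_matE[OF V(2,1)] by metis
  define D' where "D' = V' * (D * T')"
  have D': "D' \<in> carrier_mat n m" using V' D T' by (simp add: D'_def)
  have "T * c * V * D' = T * (c * (V * D'))"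
    using T c V D' by (simp add: assoc_mult_mat[of _ m n _ n _ m] assoc_mult_mat[of _ m m _ n _ m])
  also have "\<dots> = 1\<^sub>m m"
    using c T V T' V' D unfolding D'_def
    by (simp add: mult_right_inverse_cancel[of V V' n n "D * T'" m] mult_right_inverse_cancel[of c D m n T' m])
  finally show ?thesis
    using c T V D' unfolding right_invertible_mat_def by auto
qed

text \<open>If \<open>det A = 0\<close>, some invertible \<open>Q\<close> makes the last row of \<open>Q * A\<close> vanish, and then
  no product \<open>map_mat h (Q * A) * M\<close> can be the identity.\<close>

lemma det_nonzero_if_map_mat_right_invertible:
  fixes h :: "'a::field \<Rightarrow> 'b::semiring_1"
  assumes hom: "semiring_hom h" and A: "A \<in> carrier_mat n n"
    and rinv: "right_invertible_mat (map_mat h A)"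
  shows "det A \<noteq> 0"
proof
  interpret semiring_hom h by (rule hom)
  assume "det A = 0"
  obtain Q where "Q \<in> Units (ring_mat TYPE('a) n undefined)"
    and last_row: "row (Q * A) (n - 1) = 0\<^sub>v n" and "0 < n"
    using det_zero_imp_zero_row[OF A \<open>det A = 0\<close>, of undefined] by blast
  then obtain Q' where Q: "Q \<in> carrier_mat n n" "Q' \<in> carrier_mat n n" "Q * Q' = 1\<^sub>m n"
    by (auto simp: Units_def ring_mat_def)
  obtain R where R: "R \<in> carrier_mat n n" "map_mat h A * R = 1\<^sub>m n"
    using A rinv unfolding right_invertible_mat_def by auto
  define M where "M = R * map_mat h Q'"
  have M: "M \<in> carrier_mat n n" using R Q by (simp add: M_def)
  have "map_mat h (Q * A) * M = map_mat h Q * (map_mat h A * M)"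
    using Q A M by (simp add: mat_hom_mult assoc_mult_mat[of _ n n _ n _ n])
  also have "\<dots> = map_mat h (Q * Q')"
    using Q(1,2) R A unfolding M_def
    by (simp add: mult_right_inverse_cancel[of _ R n n "map_mat h Q'" n] mat_hom_mult)
  also have "\<dots> = 1\<^sub>m n"
    using Q by (simp add: mat_hom_one)
  finally have "(map_mat h (Q * A) * M) $$ (n - 1, n - 1) = 1"
    using \<open>0 < n\<close> by simp
  moreover have "(Q * A) $$ (n - 1, j) = 0" if "j < n" for j
    using arg_cong[OF last_row, of "\<lambda>v. v $ j"] that \<open>0 < n\<close> Q A by simp
  hence "(map_mat h (Q * A) * M) $$ (n - 1, n - 1) = 0"
    using \<open>0 < n\<close> Q A M by (simp add: scalar_prod_def)
  ultimately show False by simp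
qed

definition zero_pad_mat :: "nat \<Rightarrow> nat \<Rightarrow> 'a::zero mat \<Rightarrow> 'a mat" where
  "zero_pad_mat k l A = mat k l (\<lambda>(i, j). if i < dim_row A \<and> j < dim_col A then A $$ (i, j) else 0)"

lemma dim_zero_pad_mat [simp]: "dim_row (zero_pad_mat k l A) = k" "dim_col (zero_pad_mat k l A) = l"
  by (simp_all add: zero_pad_mat_def)

lemma zero_pad_mat_carrier [simp]: "zero_pad_mat k l A \<in> carrier_mat k l"
  by (simp add: carrier_matI)

lemma zero_pad_mat_id: "A \<in> carrier_mat k l \<Longrightarrow> zero_pad_mat k l A = A"
  by (auto intro!: eq_matI simp: zero_pad_mat_def)

lemma map_mat_zero_pad_mat: "h 0 = 0 \<Longrightarrow> map_mat h (zero_pad_mat k l A) = zero_pad_mat k l (map_mat h A)"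
  by (auto intro!: eq_matI simp: zero_pad_mat_def)

lemma zero_pad_mat_mult:
  fixes A :: "'a::semiring_0 mat"
  assumes "A \<in> carrier_mat p q" "B \<in> carrier_mat q r" "q \<le> k"
  shows "zero_pad_mat p k A * zero_pad_mat k r B = A * B"
proof (rule eq_matI)
  fix i j assume "i < dim_row (A * B)" "j < dim_col (A * B)"
  hence ij: "i < p" "j < r" using assms by auto
  have "(zero_pad_mat p k A * zero_pad_mat k r B) $$ (i, j)
      = (\<Sum>l \<in> {0..<k}. (if l < q then A $$ (i, l) * B $$ (l, j) else 0))"
    using ij assms by (auto simp: zero_pad_mat_def scalar_prod_def intro!: sum.cong)
  also have "\<dots> = (\<Sum>l \<in> {0..<q}. A $$ (i, l) * B $$ (l, j))"
    using assms(3) by (intro sum.mono_neutral_cong_right) auto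
  finally show "(zero_pad_mat p k A * zero_pad_mat k r B) $$ (i, j) = (A * B) $$ (i, j)"
    using ij assms by (simp add: scalar_prod_def)
qed (use assms in auto)

lemma det_zero_pad_mat_cols:
  fixes A :: "'a::field mat"
  assumes "A \<in> carrier_mat m n" "n < m"
  shows "det (zero_pad_mat m m A) = 0"
proof -
  have "zero_pad_mat m m A *\<^sub>v unit_vec m (m - 1) = 0\<^sub>v m"
    using assms by (auto intro!: eq_vecI sum.neutral simp: zero_pad_mat_def scalar_prod_def)
  moreover have "unit_vec m (m - 1) \<noteq> (0\<^sub>v m :: 'a vec)"
    using assms(2) by simp
  ultimately show ?thesis
    by (subst det_0_iff_vec_prod_zero_field[OF zero_pad_mat_carrier]) (auto intro!: exI[of _ "unit_vec m (m - 1)"])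
qed

text \<open>Padding \<open>S\<close> with zero columns keeps its image right invertible, and a zero column forces
  \<open>det = 0\<close> unless no padding was needed.\<close>

lemma map_mat_right_invertible_imp_invertible:
  fixes h :: "'a::field \<Rightarrow> 'b::semiring_1"
  assumes hom: "semiring_hom h" and S: "S \<in> carrier_mat m n" and "n \<le> m"
    and rinv: "right_invertible_mat (map_mat h S)"
  shows "m = n \<and> invertible_mat S"
proof -
  interpret semiring_hom h by (rule hom)
  obtain R where R: "R \<in> carrier_mat n m" "map_mat h S * R = 1\<^sub>m m"
    using S rinv unfolding right_invertible_mat_def by auto
  have "map_mat h (zero_pad_mat m m S) * zero_pad_mat m m R = 1\<^sub>m m"
    using S R \<open>n \<le> m\<close> by (simp add: map_mat_zero_pad_mat zero_pad_mat_mult)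
  hence "right_invertible_mat (map_mat h (zero_pad_mat m m S))"
    unfolding right_invertible_mat_def by (intro bexI[of _ "zero_pad_mat m m R"]) simp_all
  hence det: "det (zero_pad_mat m m S) \<noteq> 0"
    by (rule det_nonzero_if_map_mat_right_invertible[OF hom zero_pad_mat_carrier])
  hence "m = n" using det_zero_pad_mat_cols[OF S] \<open>n \<le> m\<close> by force
  with det S have "S \<in> Units (ring_mat TYPE('a) n undefined)"
    by (simp add: zero_pad_mat_id det_non_zero_imp_unit)
  then obtain S' where "S' \<in> carrier_mat n n" "S * S' = 1\<^sub>m n" "S' * S = 1\<^sub>m n"
    by (auto simp: Units_def ring_mat_def)
  with S \<open>m = n\<close> show ?thesis by (auto intro: invertible_matI)
qed

section \<open>The normal form\<close>

lemma inverse_of_map_mat_normal_form: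
  fixes h :: "'a::field \<Rightarrow> 'b::semiring_1"
  assumes hom: "semiring_hom h" and c: "c \<in> carrier_mat m n" "right_invertible_mat c"
    and T: "T \<in> carrier_mat m m" "invertible_mat T" and V: "V \<in> carrier_mat n n" "invertible_mat V"
    and S: "S \<in> carrier_mat m n" and TcV: "T * c * V = map_mat h S" and "n \<le> m"
  obtains E where "m = n" "E \<in> carrier_mat n n" "invertible_mat E" "E * c * V = 1\<^sub>m n"
proof -
  interpret semiring_hom h by (rule hom)
  have "right_invertible_mat (T * c * V)"
    by (rule right_invertible_mat_mult_invertible[OF c T V])
  hence "m = n" and "invertible_mat S"
    using map_mat_right_invertible_imp_invertible[OF hom S \<open>n \<le> m\<close>] unfolding TcV by auto
  then obtain S' where S': "S' \<in> carrier_mat n n" "S * S' = 1\<^sub>m n" "S' * S = 1\<^sub>m n"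
    using invertible_matE S by metis
  define E where "E = map_mat h S' * T"
  have "E * c * V = map_mat h S' * map_mat h S"
    using S' T c V \<open>m = n\<close> unfolding E_def TcV[symmetric]
    by (simp add: assoc_mult_mat[of _ n n _ n _ n])
  also have "\<dots> = 1\<^sub>m n"
    using S S' \<open>m = n\<close> by (simp add: mat_hom_one flip: mat_hom_mult)
  finally have "E * c * V = 1\<^sub>m n" .
  moreover have "invertible_mat (map_mat h S')"
    using S S' \<open>m = n\<close> by (intro invertible_mat_map_mat[OF hom] invertible_matI[of S' n S]) auto
  hence "invertible_mat E"
    unfolding E_def using S' T \<open>m = n\<close> by (intro invertible_mat_mult[of _ n]) simp_all
  moreover have "E \<in> carrier_mat n n" using S' T \<open>m = n\<close> by (simp add: E_def)
  ultimately show ?thesis using that \<open>m = n\<close> by blast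
qed

lemma intertwining_matrix_scalar_normal_form:
  fixes phi psi :: "nat \<Rightarrow> 'b::unital_cstar_algebra \<Rightarrow> 'a::unital_cstar_algebra"
  assumes phi: "\<And>i. i < m \<Longrightarrow> star_hom (phi i) \<and> surj (phi i)"
    and psi: "\<And>j. j < n \<Longrightarrow> star_hom (psi j) \<and> surj (psi j)"
    and center: "trivial_center TYPE('a)"
    and c: "c \<in> carrier_mat m n"
    and intertw: "\<And>b i j. i < m \<Longrightarrow> j < n \<Longrightarrow> phi i b * c $$ (i, j) = c $$ (i, j) * psi j b"
  obtains T V S where "T \<in> carrier_mat m m" "invertible_mat T"
    and "V \<in> carrier_mat n n" "invertible_mat V"
    and "S \<in> carrier_mat m n" "T * c * V = map_mat of_complex S"
proof -
  obtain r v where rep: "canonical_representatives psi r v"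
    using canonical_representatives_exist by blast
  have "\<exists>t. invertible_elem t \<and> (\<forall>j<n. inv_elem t * c $$ (i, j) * inv_elem (v j) \<in> range of_complex)"
    if i: "i < m" for i
  proof (rule intertwiner_row_normal_form[where psi = psi and n = n and r = r and v = v])
    show "intertwines (phi i) (psi j) (c $$ (i, j))" if "j < n" for j
      using intertw[OF i that] by (simp add: intertwines_def)
  qed (rule conjunct1[OF phi[OF i]] conjunct2[OF phi[OF i]] psi center rep; assumption?)+
  then obtain t where t: "\<And>i. i < m \<Longrightarrow> invertible_elem (t i)"
    and scalar: "\<And>i j. i < m \<Longrightarrow> j < n \<Longrightarrow> inv_elem (t i) * c $$ (i, j) * inv_elem (v j) \<in> range of_complex"
    by metis
  define a where "a i j = inv_into UNIV of_complex (inv_elem (t i) * c $$ (i, j) * inv_elem (v j))" for i j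
  have a: "inv_elem (t i) * c $$ (i, j) * inv_elem (v j) = of_complex (a i j)" if "i < m" "j < n" for i j
    unfolding a_def by (rule f_inv_into_f[symmetric]) (rule scalar[OF that])
  have v: "invertible_elem (v j)" for j
    using rep unfolding canonical_representatives_def by blast
  define T where "T = mat_diag m (\<lambda>i. inv_elem (t i))"
  define V where "V = mat_diag n (\<lambda>j. inv_elem (v j))"
  have "T * c * V = map_mat of_complex (mat m n (\<lambda>(i, j). a i j))"
    unfolding T_def V_def mat_diag_mult_left[OF c] by (subst mat_diag_mult_right) (auto simp: a)
  moreover have "invertible_mat T" "invertible_mat V"
    unfolding T_def V_def using t v by (simp_all add: invertible_mat_diag invertible_elem_inv_elem)
  ultimately show ?thesis by (intro that) (simp_all add: T_def V_def)
qed

theorem lemma3p3: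
  fixes phi :: "nat \<Rightarrow> 'b::unital_cstar_algebra \<Rightarrow> 'c::unital_cstar_algebra"
    and psi :: "nat \<Rightarrow> 'b \<Rightarrow> 'c"
    and c :: "'c mat"
    and m n :: nat
  assumes phi: "\<And>i. i < m \<Longrightarrow> star_hom (phi i) \<and> surj (phi i)"
    and psi: "\<And>j. j < n \<Longrightarrow> star_hom (psi j) \<and> surj (psi j)"
    and mn: "m \<ge> n"
    and c_dim: "c \<in> carrier_mat m n"
    and intertw: "\<And>b i j. i < m \<Longrightarrow> j < n \<Longrightarrow> phi i b * c $$ (i, j) = c $$ (i, j) * psi j b"
    and rinv: "right_invertible_mat c"
    and center: "trivial_center TYPE('c)"
  shows "m = n \<and>
    (\<exists>E \<in> carrier_mat n n. \<exists>F \<in> carrier_mat n n.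
       invertible_mat E \<and> invertible_mat F \<and>
       diagonal_mat (E * c * F) \<and>
       (\<forall>i < n. invertible_elem ((E * c * F) $$ (i, i))))"
proof -
  obtain T V S where T: "T \<in> carrier_mat m m" "invertible_mat T"
    and V: "V \<in> carrier_mat n n" "invertible_mat V"
    and S: "S \<in> carrier_mat m n" and TcV: "T * c * V = map_mat of_complex S"
    using intertwining_matrix_scalar_normal_form[OF phi psi center c_dim intertw] by blast
  obtain E where "m = n" and E: "E \<in> carrier_mat n n" "invertible_mat E" and EcV: "E * c * V = 1\<^sub>m n"
    using inverse_of_map_mat_normal_form[OF semiring_hom_of_complex c_dim rinv T V S TcV mn] by blast
  have "diagonal_mat (E * c * V)" "\<forall>i < n. invertible_elem ((E * c * V) $$ (i, i))"
    unfolding EcV by (auto simp: diagonal_mat_def invertible_elem_def)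
  with \<open>m = n\<close> E V show ?thesis by blast
qed

end
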